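(* Let $n\ge3$, $J\subseteq\{1,\dots,n\}$ nonempty, $r_k>0$ for $k\in J$, $\mathcal X(J)=\bigcup_{k\in J}\frac{r_k}{\sqrt k}\mathcal I^n_k$, with positive weight functions $w$ constant (value $w_k$) on each $\frac{r_k}{\sqrt k}\mathcal I^n_k$. 1. Suppose $|J|=1$. If $n\not\equiv1\pmod3$, then $(\mathcal X(J),w)$ is never a Euclidean $5$-design. If $n\equiv1\pmod 3$ and $J=\{k\}$, then $(\mathcal X(J),w)$ is a Euclidean $5$-design if and only if $k=\frac{n+2}{3}$; in particular, if $n\equiv 1\pmod3$ and $k=\frac{n+2}3$, then $(\mathcal X(\{k\}),w)$ is a Euclidean $5$-design for any positive $r_k$ and $w_k$. 2. Suppose $|J|\ge2$. Then there is a weight function $w$ for which $(\mathcal X(J),w)$ is a Euclidean $5$-design if and only if there exist $k_1,k_2\in J$ with $k_1<\frac{n+2}{3}<k_2$. In particular, $(\mathcal X(\{1,n\}),w)$ is a Euclidean $5$-design for any positive $r_1,r_n,w_1,w_n$ satisfying $\frac{w_1}{w_n}\cdot\frac{r_1^4}{r_n^4}=\frac{2^n}{n^2}$.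
   Context: $\mathcal I^n_k$ is the set of vectors in $\{-1,0,1\}^n$ with exactly $k$ nonzero entries. For finite $\mathcal X\subset\mathbb R^n\setminus\{0\}$ with positive weights $w$, $R=\{\|x\|\}$ and $W_r=\sum_{\|x\|=r}w(x)$, $(\mathcal X,w)$ is a Euclidean $t$-design if $\sum_{r\in R}W_r\overline f_{S^{n-1}_r}=\sum_{x\in\mathcal X}w(x)f(x)$ for all real polynomials $f$ of degree $\le t$, where $\overline f_{S^{n-1}_r}$ is the average of $f$ over the sphere of radius $r$ centered at the origin. *)

theory Defs
  imports "HOL-Analysis.Analysis"
begin

definition poly_fun_deg :: "nat \<Rightarrow> (real^'n \<Rightarrow> real) \<Rightarrow> bool" where
  "poly_fun_deg t f \<longleftrightarrow>
     (\<exists>(A :: ('n \<Rightarrow> nat) set) c. finite A \<and> (\<forall>a\<in>A. (\<Sum>i\<in>UNIV. a i) \<le> t) \<and>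
        (\<forall>x. f x = (\<Sum>a\<in>A. c a * (\<Prod>i\<in>UNIV. (x $ i) ^ a i))))"

text \<open>Average of f over the sphere of radius r centred at 0, with respect to the
  normalized rotation-invariant (surface) measure on the sphere, realised as the
  image of the uniform probability measure on the unit ball under x \<mapsto> r x/|x|.\<close>
definition sphere_avg :: "real \<Rightarrow> (real^'n \<Rightarrow> real) \<Rightarrow> real" where
  "sphere_avg r f =
     set_lebesgue_integral lborel (ball 0 1) (\<lambda>x. f (r *\<^sub>R (inverse (norm x) *\<^sub>R x)))
       / measure lborel (ball (0::real^'n) 1)"

definition euclidean_design :: "nat \<Rightarrow> (real^'n) set \<Rightarrow> (real^'n \<Rightarrow> real) \<Rightarrow> bool" where
  "euclidean_design t X w \<longleftrightarrow>
     finite X \<and> 0 \<notin> X \<and> (\<forall>x\<in>X. w x > 0) \<and>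
     (\<forall>f. poly_fun_deg t f \<longrightarrow>
        (\<Sum>\<rho>\<in>norm ` X. (\<Sum>x\<in>{x\<in>X. norm x = \<rho>}. w x) * sphere_avg \<rho> f)
          = (\<Sum>x\<in>X. w x * f x))"

definition Ink :: "nat \<Rightarrow> (real^'n) set" where
  "Ink k = {x. (\<forall>i. x $ i \<in> {-1, 0, 1}) \<and> card {i. x $ i \<noteq> 0} = k}"

definition XJ :: "nat set \<Rightarrow> (nat \<Rightarrow> real) \<Rightarrow> (real^'n) set" where
  "XJ J r = (\<Union>k\<in>J. (\<lambda>x. (r k / sqrt (real k)) *\<^sub>R x) ` Ink k)"

text \<open>Weight function taking the value wk k on the shell (r_k/sqrt k) I^n_k
  (a point of that shell has exactly k nonzero coordinates).\<close>
definition shellw :: "(nat \<Rightarrow> real) \<Rightarrow> real^'n \<Rightarrow> real" where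
  "shellw wk x = wk (card {i. x $ i \<noteq> 0})"

end

(*
  Averaging over a sphere and summing over a finite set X with weights w are linear functionals
  on polynomials; when X and w are invariant under coordinate sign changes and permutations, both
  functionals are. For such a functional the odd monomials vanish, the even monomials of degree at
  most 4 reduce to 1, x_i^2, x_i^4 and x_i^2 x_j^2, and the identities |x|^2 = sum_k x_k^2 and
  |x|^4 = sum_{k,l} x_k^2 x_l^2 determine everything except the ratio of the x_i^4 and x_i^2 x_j^2
  moments. On a sphere that ratio is 3, by invariance under the reflection mixing two coordinates
  at 45 degrees, so X is a 5-design iff sum w x_i^4 = 3 sum w x_i^2 x_j^2.

  For X(J) the same two identities give the moments of each shell I^n_k, and the condition becomes
  sum_{k in J} w_k r_k^4 |I^n_k| (n + 2 - 3k) / k = 0. Positive weights solving it exist iff the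
  coefficients n + 2 - 3k all vanish or take both signs.
*)

theory Submission
  imports Defs "HOL-Combinatorics.Transposition"
begin

section \<open>Orthogonal invariance of Lebesgue measure\<close>

definition vec_relabel :: "('m \<Rightarrow> 'n) \<Rightarrow> real^'n \<Rightarrow> real^'m" where
  "vec_relabel h x = (\<chi> j. x $ h j)"

lemma vec_relabel_nth [simp]: "vec_relabel h x $ j = x $ h j"
  by (simp add: vec_relabel_def)

lemma vec_relabel_vec_relabel: "vec_relabel h (vec_relabel g x) = vec_relabel (g \<circ> h) x"
  by (simp add: vec_eq_iff)

lemma vec_relabel_inv:
  assumes "bij p"
  shows "vec_relabel p (vec_relabel (inv p) x) = x" "vec_relabel (inv p) (vec_relabel p x) = x"
  using assms by (simp_all add: vec_eq_iff bij_is_inj bij_is_surj surj_f_inv_f)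

lemma linear_vec_relabel: "linear (vec_relabel h)"
  by (auto simp: linear_iff vec_eq_iff)

lemma norm_vec_relabel:
  assumes "bij h"
  shows "norm (vec_relabel h x) = norm x"
proof -
  have "(\<Sum>j\<in>UNIV. (x $ h j)\<^sup>2) = (\<Sum>i\<in>UNIV. (x $ i)\<^sup>2)"
    using sum.reindex_bij_betw[OF assms] by simp
  then show ?thesis
    by (simp add: norm_vec_def L2_set_def)
qed

lemma orthogonal_transformation_vec_relabel:
  "bij p \<Longrightarrow> orthogonal_transformation (vec_relabel p)"
  by (simp add: orthogonal_transformation linear_vec_relabel norm_vec_relabel)

lemma borel_measurable_linear:
  fixes f :: "'a::euclidean_space \<Rightarrow> 'b::euclidean_space"
  shows "linear f \<Longrightarrow> f \<in> borel_measurable borel"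
  by (intro borel_measurable_continuous_onI linear_continuous_on
      linear_conv_bounded_linear[THEN iffD1])

lemma emeasure_lborel_box_cart:
  assumes "\<And>i. l $ i \<le> u $ i"
  shows "emeasure lborel (box l u) = ennreal (\<Prod>i\<in>UNIV. u $ i - l $ i)"
  using assms
  by (simp add: emeasure_lborel_box_eq Basis_vec_def cart_eq_inner_axis axis_eq_axis
      prod.UNION_disjoint inner_diff_left)

lemma lborel_distr_vec_relabel:
  fixes h :: "'m::finite \<Rightarrow> 'n::finite"
  assumes h: "bij h"
  shows "distr lborel borel (vec_relabel h :: real^'n \<Rightarrow> real^'m) = lborel"
proof (rule lborel_eqI[symmetric])
  fix l u :: "(real, 'm) vec"
  assume le: "\<And>b. b \<in> Basis \<Longrightarrow> l \<bullet> b \<le> u \<bullet> b"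
  have lu: "l $ j \<le> u $ j" for j
    using le[of "axis j 1"] by (auto simp: Basis_vec_def inner_axis)
  have pre: "vec_relabel h -` box l u = box (vec_relabel (inv h) l) (vec_relabel (inv h) u)"
    using bij_inv_eq_iff[OF h] by (auto simp: mem_box_cart) metis+
  have "vec_relabel h \<in> borel_measurable borel"
    by (rule borel_measurable_linear[OF linear_vec_relabel])
  then have "emeasure (distr lborel borel (vec_relabel h)) (box l u)
      = emeasure lborel (box (vec_relabel (inv h) l) (vec_relabel (inv h) u))"
    by (simp add: emeasure_distr pre)
  also have "\<dots> = ennreal (\<Prod>i\<in>UNIV. u $ inv h i - l $ inv h i)"
    by (simp add: emeasure_lborel_box_cart lu)
  also have "(\<Prod>i\<in>UNIV. u $ inv h i - l $ inv h i) = (\<Prod>j\<in>UNIV. u $ j - l $ j)"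
    using prod.reindex_bij_betw[OF bij_imp_bij_inv[OF h]] by simp
  also have "ennreal \<dots> = emeasure lborel (box l u)"
    by (simp add: emeasure_lborel_box_cart lu)
  finally show "emeasure (distr lborel borel (vec_relabel h)) (box l u) = (\<Prod>b\<in>Basis. (u - l) \<bullet> b)"
    using emeasure_lborel_box[OF le] by simp
qed simp

(* measure_orthogonal_image needs a well-ordered index type; orthogonal invariance is
   transferred to an arbitrary finite index type through this well-ordered copy of it. *)
datatype 'a ranked = Rank (unrank: 'a)

lemma bij_Rank: "bij Rank"
  by (metis bijI' ranked.exhaust ranked.inject)

lemma bij_unrank: "bij unrank"
  by (metis bijI' ranked.exhaust_sel ranked.sel)

instance ranked :: (finite) finite
  by standard (metis bij_Rank bij_is_surj finite finite_imageI)

instantiation ranked :: (finite) linorder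
begin

definition less_eq_ranked :: "'a ranked \<Rightarrow> 'a ranked \<Rightarrow> bool" where
  "less_eq_ranked x y \<longleftrightarrow> to_nat (unrank x) \<le> to_nat (unrank y)"

definition less_ranked :: "'a ranked \<Rightarrow> 'a ranked \<Rightarrow> bool" where
  "less_ranked x y \<longleftrightarrow> to_nat (unrank x) < to_nat (unrank y)"

instance
proof
  fix x y z :: "'a ranked"
  show "x < y \<longleftrightarrow> x \<le> y \<and> \<not> y \<le> x" "x \<le> x" "x \<le> y \<or> y \<le> x"
    by (auto simp: less_eq_ranked_def less_ranked_def)
  show "x \<le> y \<Longrightarrow> y \<le> z \<Longrightarrow> x \<le> z"
    by (simp add: less_eq_ranked_def)
  show "x \<le> y \<Longrightarrow> y \<le> x \<Longrightarrow> x = y"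
    by (metis le_antisym less_eq_ranked_def to_nat_split ranked.expand)
qed

end

instance ranked :: (finite) wellorder
proof
  fix P :: "'a ranked \<Rightarrow> bool" and a
  assume step: "\<And>x. (\<And>y. y < x \<Longrightarrow> P y) \<Longrightarrow> P x"
  show "P a"
    by (induction "to_nat (unrank a)" arbitrary: a rule: less_induct)
      (use step in \<open>auto simp: less_ranked_def\<close>)
qed

lemma lborel_distr_orthogonal_wellorder:
  fixes T :: "(real, 'm::{finite,wellorder}) vec \<Rightarrow> (real, 'm) vec"
  assumes T: "orthogonal_transformation T"
  shows "distr lborel borel T = lborel"
proof (rule lborel_eqI[symmetric])
  have T_meas: "T \<in> borel_measurable borel"
    using T by (simp add: borel_measurable_linear orthogonal_transformation_linear)
  fix l u :: "(real, 'm) vec"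
  assume "\<And>b. b \<in> Basis \<Longrightarrow> l \<bullet> b \<le> u \<bullet> b"
  then have box: "emeasure lborel (box l u) = (\<Prod>b\<in>Basis. (u - l) \<bullet> b)"
    by (rule emeasure_lborel_box)
  have G: "orthogonal_transformation (inv T)"
    using T orthogonal_transformation_inv by blast
  have pre: "T -` box l u = inv T ` box l u"
    using T orthogonal_transformation_bij bij_vimage_eq_inv_image by blast
  have bounded: "bounded (T -` box l u)"
    unfolding pre using G orthogonal_transformation_linear
    by (metis bounded_box bounded_linear_image linear_linear)
  have "emeasure lborel (T -` box l u) = measure lborel (T -` box l u)"
    using emeasure_bounded_finite[OF bounded] by (intro emeasure_eq_ennreal_measure) simp
  also have "measure lborel (T -` box l u) = measure lebesgue (inv T ` box l u)"
    using measurable_sets[OF T_meas, of "box l u"] pre by simp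
  also have "\<dots> = measure lebesgue (box l u)"
    using G by (simp add: measure_orthogonal_image)
  also have "ennreal (measure lebesgue (box l u)) = emeasure lborel (box l u)"
    using emeasure_bounded_finite[of "box l u"]
    by (simp add: emeasure_eq_ennreal_measure)
  finally show "emeasure (distr lborel borel T) (box l u) = (\<Prod>b\<in>Basis. (u - l) \<bullet> b)"
    using T_meas box by (simp add: emeasure_distr)
qed simp

lemma lborel_distr_orthogonal:
  fixes T :: "real^'n::finite \<Rightarrow> real^'n"
  assumes T: "orthogonal_transformation T"
  shows "distr lborel borel T = lborel"
proof -
  let ?R = "vec_relabel unrank :: real^'n \<Rightarrow> real^'n ranked"
  let ?R' = "vec_relabel Rank :: real^'n ranked \<Rightarrow> real^'n"
  define T' where "T' = ?R \<circ> T \<circ> ?R'"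
  have "linear T"
    using T orthogonal_transformation_linear by blast
  then have T': "orthogonal_transformation T'"
    using T by (auto simp: orthogonal_transformation T'_def norm_vec_relabel bij_Rank bij_unrank
        orthogonal_transformation_norm intro!: linear_compose linear_vec_relabel)
  have "T \<circ> ?R' = ?R' \<circ> T'"
    by (simp add: T'_def fun_eq_iff vec_relabel_vec_relabel comp_def vec_eq_iff)
  then have "distr (distr lborel borel ?R') borel T = distr (distr lborel borel T') borel ?R'"
    using T' \<open>linear T\<close>
    by (simp add: distr_distr borel_measurable_linear linear_vec_relabel orthogonal_transformation_linear)
  then show ?thesis
    by (simp add: lborel_distr_vec_relabel bij_Rank lborel_distr_orthogonal_wellorder[OF T'])
qed

section \<open>Functionals invariant under signed coordinate permutations\<close>

definition coord_flip :: "'n \<Rightarrow> real^'n \<Rightarrow> real^'n" where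
  "coord_flip i x = (\<chi> k. if k = i then - x $ k else x $ k)"

lemma coord_flip_nth [simp]: "coord_flip i x $ k = (if k = i then - x $ k else x $ k)"
  by (simp add: coord_flip_def)

lemma coord_flip_coord_flip [simp]: "coord_flip i (coord_flip i x) = x"
  by (simp add: vec_eq_iff)

lemma norm_pow2_cart: "norm (x :: real^'n) ^ 2 = (\<Sum>k\<in>UNIV. (x $ k) ^ 2)"
  unfolding power2_norm_eq_inner inner_vec_def by (simp add: power2_eq_square)

lemma orthogonal_transformation_coord_flip:
  "orthogonal_transformation (coord_flip i :: real^'n \<Rightarrow> real^'n)"
proof -
  have "norm (coord_flip i x) ^ 2 = norm x ^ 2" for x :: "real^'n"
    unfolding norm_pow2_cart by (intro sum.cong) auto
  then show ?thesis
    by (auto simp: orthogonal_transformation linear_iff vec_eq_iff intro: power2_eq_imp_eq)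
qed

definition monomial :: "('n \<Rightarrow> nat) \<Rightarrow> real^'n \<Rightarrow> real" where
  "monomial a x = (\<Prod>i\<in>UNIV. (x $ i) ^ a i)"

lemma continuous_on_monomial: "continuous_on UNIV (monomial a)"
  unfolding monomial_def by (intro continuous_intros)

lemma monomial_coord_flip:
  assumes "odd (a i)"
  shows "monomial a (coord_flip i x) = - monomial a x"
proof -
  have "monomial a (coord_flip i x) = (\<Prod>k\<in>UNIV. (if k = i then -1 else 1) * (x $ k) ^ a k)"
    unfolding monomial_def using assms by (intro prod.cong) auto
  also have "\<dots> = (\<Prod>k\<in>UNIV. if k = i then -1 else 1) * monomial a x"
    by (simp add: prod.distrib monomial_def)
  finally show ?thesis
    by simp
qed

locale coord_symmetric_functional =
  fixes L :: "(real^'n \<Rightarrow> real) \<Rightarrow> real"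
  assumes add: "continuous_on UNIV f \<Longrightarrow> continuous_on UNIV g \<Longrightarrow> L (\<lambda>x. f x + g x) = L f + L g"
    and cmult: "L (\<lambda>x. c * f x) = c * L f"
    and flip_invariant: "continuous_on UNIV f \<Longrightarrow> L (\<lambda>x. f (coord_flip i x)) = L f"
    and relabel_invariant: "continuous_on UNIV f \<Longrightarrow> bij p \<Longrightarrow> L (\<lambda>x. f (vec_relabel p x)) = L f"
begin

lemma cdiv: "L (\<lambda>x. f x / c) = L f / c"
  using cmult[of "inverse c" f] by (simp add: field_simps)

lemma sum:
  assumes "finite A" "\<And>a. a \<in> A \<Longrightarrow> continuous_on UNIV (F a)"
  shows "L (\<lambda>x. \<Sum>a\<in>A. F a x) = (\<Sum>a\<in>A. L (F a))"
  using assms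
proof (induction A rule: finite_induct)
  case empty
  then show ?case
    using cmult[of 0 "\<lambda>x. 0"] by simp
next
  case (insert a A)
  then show ?case
    by (simp add: add continuous_on_sum)
qed

lemma odd_vanishes:
  assumes "continuous_on UNIV f" "\<And>x. f (coord_flip i x) = - f x"
  shows "L f = 0"
proof -
  have "L f = L (\<lambda>x. - f x)"
    using flip_invariant[OF assms(1), of i] by (simp add: assms(2))
  also have "\<dots> = - L f"
    using cmult[of "-1" f] by simp
  finally show ?thesis
    by simp
qed

lemma monomial_odd: "odd (a i) \<Longrightarrow> L (monomial a) = 0"
  by (rule odd_vanishes[OF continuous_on_monomial]) (rule monomial_coord_flip)

lemma coord_pow: "L (\<lambda>x. (x $ i) ^ e) = L (\<lambda>x. (x $ j) ^ e)"
  using relabel_invariant[of "\<lambda>x. (x $ j) ^ e" "Transposition.transpose i j"]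
  by (simp add: continuous_intros bij_transpose)

lemma coord_sq_sq:
  assumes "i \<noteq> j" "k \<noteq> l"
  shows "L (\<lambda>x. (x $ i)\<^sup>2 * (x $ j)\<^sup>2) = L (\<lambda>x. (x $ k)\<^sup>2 * (x $ l)\<^sup>2)"
proof -
  define p where "p = Transposition.transpose k i \<circ> Transposition.transpose l (Transposition.transpose k i j)"
  have "bij p"
    by (simp add: p_def bij_comp bij_transpose)
  moreover have "p k = i" "p l = j"
    using assms by (auto simp: p_def Transposition.transpose_def)
  ultimately show ?thesis
    using relabel_invariant[of "\<lambda>x. (x $ k)\<^sup>2 * (x $ l)\<^sup>2" p] by (simp add: continuous_intros)
qed

lemma norm_pow2: "L (\<lambda>x. norm x ^ 2) = CARD('n) * L (\<lambda>x. (x $ i)\<^sup>2)"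
proof -
  have "L (\<lambda>x. norm x ^ 2) = (\<Sum>k\<in>UNIV. L (\<lambda>x. (x $ k)\<^sup>2))"
    unfolding norm_pow2_cart by (rule sum) (auto intro!: continuous_intros)
  also have "\<dots> = (\<Sum>k\<in>(UNIV::'n set). L (\<lambda>x. (x $ i)\<^sup>2))"
    by (intro sum.cong refl coord_pow)
  finally show ?thesis
    by simp
qed

lemma norm_pow4:
  assumes "i \<noteq> j"
  shows "L (\<lambda>x. norm x ^ 4) =
    CARD('n) * (L (\<lambda>x. (x $ i) ^ 4) + (real CARD('n) - 1) * L (\<lambda>x. (x $ i)\<^sup>2 * (x $ j)\<^sup>2))"
proof -
  have row: "(\<Sum>l\<in>UNIV. L (\<lambda>x. (x $ k)\<^sup>2 * (x $ l)\<^sup>2)) =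
    L (\<lambda>x. (x $ i) ^ 4) + (real CARD('n) - 1) * L (\<lambda>x. (x $ i)\<^sup>2 * (x $ j)\<^sup>2)" for k
  proof -
    have "(\<Sum>l\<in>UNIV. L (\<lambda>x. (x $ k)\<^sup>2 * (x $ l)\<^sup>2)) =
        L (\<lambda>x. (x $ k)\<^sup>2 * (x $ k)\<^sup>2) + (\<Sum>l\<in>UNIV-{k}. L (\<lambda>x. (x $ k)\<^sup>2 * (x $ l)\<^sup>2))"
      by (rule sum.remove) auto
    also have "L (\<lambda>x. (x $ k)\<^sup>2 * (x $ k)\<^sup>2) = L (\<lambda>x. (x $ i) ^ 4)"
      using coord_pow[of k 4 i] by (simp flip: power_add)
    also have "(\<Sum>l\<in>UNIV-{k}. L (\<lambda>x. (x $ k)\<^sup>2 * (x $ l)\<^sup>2)) =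
        (\<Sum>l\<in>UNIV-{k}. L (\<lambda>x. (x $ i)\<^sup>2 * (x $ j)\<^sup>2))"
    proof (rule sum.cong[OF refl])
      fix l
      assume "l \<in> UNIV - {k}"
      then show "L (\<lambda>x. (x $ k)\<^sup>2 * (x $ l)\<^sup>2) = L (\<lambda>x. (x $ i)\<^sup>2 * (x $ j)\<^sup>2)"
        using coord_sq_sq[OF assms, of k l] by simp
    qed
    finally show ?thesis
      by (simp add: card_Diff_singleton of_nat_diff)
  qed
  have "norm x ^ 4 = (\<Sum>k\<in>UNIV. \<Sum>l\<in>UNIV. (x $ k)\<^sup>2 * (x $ l)\<^sup>2)" for x :: "real^'n"
  proof -
    have "norm x ^ 4 = (\<Sum>k\<in>UNIV. (x $ k)\<^sup>2) * (\<Sum>l\<in>UNIV. (x $ l)\<^sup>2)"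
      unfolding norm_pow2_cart[symmetric] by algebra
    then show ?thesis
      by (simp add: sum_product)
  qed
  then have "L (\<lambda>x. norm x ^ 4) = (\<Sum>k\<in>UNIV. \<Sum>l\<in>UNIV. L (\<lambda>x. (x $ k)\<^sup>2 * (x $ l)\<^sup>2))"
    by (simp add: sum continuous_intros)
  then show ?thesis
    by (simp add: row)
qed

end

section \<open>Averages over spheres\<close>

definition radial_proj :: "real \<Rightarrow> real^'n \<Rightarrow> real^'n" where
  "radial_proj \<rho> x = \<rho> *\<^sub>R (inverse (norm x) *\<^sub>R x)"

lemma sphere_avg_radial_proj:
  fixes f :: "real^'n \<Rightarrow> real"
  shows "sphere_avg \<rho> f = (\<integral>x\<in>ball 0 1. f (radial_proj \<rho> x) \<partial>lborel) / measure lborel (ball (0::real^'n) 1)"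
  unfolding sphere_avg_def radial_proj_def by (rule refl)

lemma norm_radial_proj: "x \<noteq> 0 \<Longrightarrow> norm (radial_proj \<rho> x) = \<bar>\<rho>\<bar>"
  by (simp add: radial_proj_def abs_mult)

lemma norm_radial_proj_le: "norm (radial_proj \<rho> x) \<le> \<bar>\<rho>\<bar>"
  by (cases "x = 0") (simp_all add: norm_radial_proj, simp add: radial_proj_def)

lemma borel_measurable_radial_proj [measurable]: "radial_proj \<rho> \<in> borel_measurable borel"
  unfolding radial_proj_def by measurable

lemma borel_measurable_sphere_avg_integrand:
  "continuous_on UNIV f \<Longrightarrow> (\<lambda>x. f (radial_proj \<rho> x)) \<in> borel_measurable borel"
  using measurable_compose[OF borel_measurable_radial_proj borel_measurable_continuous_onI] .

lemma orthogonal_transformation_radial_proj: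
  "orthogonal_transformation T \<Longrightarrow> T (radial_proj \<rho> x) = radial_proj \<rho> (T x)"
  by (simp add: radial_proj_def orthogonal_transformation_norm orthogonal_transformation_linear
      linear_cmul)

lemma set_integrable_sphere_avg:
  fixes f :: "real^'n \<Rightarrow> real"
  assumes f: "continuous_on UNIV f"
  shows "set_integrable lborel (ball 0 1) (\<lambda>x. f (radial_proj \<rho> x))"
proof -
  obtain B where B: "\<And>y. y \<in> cball 0 \<bar>\<rho>\<bar> \<Longrightarrow> norm (f y) \<le> B"
    using compact_imp_bounded[OF compact_continuous_image[OF continuous_on_subset[OF f]]]
    by (metis bounded_iff compact_cball image_eqI subset_UNIV)
  have "norm (f (radial_proj \<rho> x)) \<le> B" for x :: "real^'n"
    by (metis B mem_cball_0 norm_radial_proj_le)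
  then show ?thesis
    unfolding set_integrable_def
    by (intro integrableI_bounded_set_indicator[where B=B] emeasure_bounded_finite)
      (simp_all add: borel_measurable_sphere_avg_integrand[OF f])
qed

lemma sphere_avg_add:
  fixes f g :: "real^'n \<Rightarrow> real"
  assumes "continuous_on UNIV f" "continuous_on UNIV g"
  shows "sphere_avg \<rho> (\<lambda>x. f x + g x) = sphere_avg \<rho> f + sphere_avg \<rho> g"
proof -
  have "(\<integral>x\<in>ball 0 1. f (radial_proj \<rho> x) + g (radial_proj \<rho> x) \<partial>lborel) =
      (\<integral>x\<in>ball 0 1. f (radial_proj \<rho> x) \<partial>lborel) + (\<integral>x\<in>ball 0 1. g (radial_proj \<rho> x) \<partial>lborel)"
    using assms by (intro set_integral_add set_integrable_sphere_avg)
  then show ?thesis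
    by (simp add: sphere_avg_radial_proj add_divide_distrib)
qed

lemma sphere_avg_cmult: "sphere_avg \<rho> (\<lambda>x. c * f x) = c * sphere_avg \<rho> (f :: real^'n \<Rightarrow> real)"
  by (simp add: sphere_avg_radial_proj set_integral_mult_right)

lemma sphere_avg_orthogonal:
  fixes T :: "real^'n \<Rightarrow> real^'n" and f :: "real^'n \<Rightarrow> real"
  assumes T: "orthogonal_transformation T" and f: "continuous_on UNIV f"
  shows "sphere_avg \<rho> (\<lambda>x. f (T x)) = sphere_avg \<rho> f"
proof -
  define H where "H = (\<lambda>y::real^'n. indicator (ball 0 1) y *\<^sub>R f (radial_proj \<rho> y))"
  have T_meas: "T \<in> borel_measurable borel"
    using T by (simp add: borel_measurable_linear orthogonal_transformation_linear)
  have H_meas: "H \<in> borel_measurable borel"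
    unfolding H_def
    by (intro borel_measurable_scaleR borel_measurable_indicator
        borel_measurable_sphere_avg_integrand[OF f]) simp
  have "indicator (ball 0 1) x *\<^sub>R f (T (radial_proj \<rho> x)) = H (T x)" for x
  proof -
    have "indicator (ball 0 1) (T x) = (indicator (ball 0 1) x :: real)"
      by (simp add: indicator_def orthogonal_transformation_norm[OF T])
    then show ?thesis
      unfolding H_def orthogonal_transformation_radial_proj[OF T] by simp
  qed
  then have "(\<integral>x\<in>ball 0 1. f (T (radial_proj \<rho> x)) \<partial>lborel) = integral\<^sup>L lborel (\<lambda>x. H (T x))"
    by (simp add: set_lebesgue_integral_def)
  also have "\<dots> = integral\<^sup>L (distr lborel borel T) H"
    using H_meas T_meas by (simp add: integral_distr)
  also have "\<dots> = (\<integral>y\<in>ball 0 1. f (radial_proj \<rho> y) \<partial>lborel)"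
    by (simp add: lborel_distr_orthogonal[OF T] H_def set_lebesgue_integral_def)
  finally show ?thesis
    by (simp add: sphere_avg_radial_proj)
qed

lemma sphere_avg_const_on_sphere:
  fixes f :: "real^'n \<Rightarrow> real"
  assumes "\<rho> \<noteq> 0" and f: "continuous_on UNIV f" and c: "\<And>y. norm y = \<bar>\<rho>\<bar> \<Longrightarrow> f y = c"
  shows "sphere_avg \<rho> f = c"
proof -
  have "(\<integral>x\<in>ball 0 1. f (radial_proj \<rho> x) \<partial>lborel) = (\<integral>x\<in>ball (0::real^'n) 1. c \<partial>lborel)"
    unfolding set_lebesgue_integral_def
  proof (rule integral_cong_AE)
    show "AE x in lborel. indicator (ball 0 1) x *\<^sub>R f (radial_proj \<rho> x) =
        indicator (ball (0::real^'n) 1) x *\<^sub>R c"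
      using AE_lborel_singleton[of "0::real^'n"]
      by eventually_elim (simp add: c norm_radial_proj)
  qed (auto intro!: borel_measurable_times borel_measurable_indicator
      borel_measurable_sphere_avg_integrand[OF f])
  also have "\<dots> = c * measure lborel (ball (0::real^'n) 1)"
    using emeasure_bounded_finite[of "ball (0::real^'n) 1"]
    by (simp add: set_integral_const)
  finally show ?thesis
    using content_ball_pos[of 1 "0::real^'n"] by (simp add: sphere_avg_radial_proj)
qed

interpretation sphere_avg: coord_symmetric_functional "sphere_avg \<rho>" for \<rho>
  by unfold_locales
    (simp_all add: sphere_avg_add sphere_avg_cmult sphere_avg_orthogonal
      orthogonal_transformation_coord_flip orthogonal_transformation_vec_relabel)

lemma sphere_avg_norm_pow:
  assumes "\<rho> \<noteq> 0"
  shows "sphere_avg \<rho> (\<lambda>x::real^'n. norm x ^ m) = \<bar>\<rho>\<bar> ^ m"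
  by (rule sphere_avg_const_on_sphere[OF assms])
    (simp_all add: continuous_on_power continuous_on_norm_id)

lemma sphere_avg_coord_pow2:
  assumes "\<rho> \<noteq> 0"
  shows "sphere_avg \<rho> (\<lambda>x::real^'n. (x $ i)\<^sup>2) = \<rho>\<^sup>2 / CARD('n)"
proof -
  have "CARD('n) * sphere_avg \<rho> (\<lambda>x::real^'n. (x $ i)\<^sup>2) = sphere_avg \<rho> (\<lambda>x::real^'n. norm x ^ 2)"
    by (rule sphere_avg.norm_pow2[symmetric])
  also have "\<dots> = \<rho>\<^sup>2"
    using sphere_avg_norm_pow[OF assms, of 2] by simp
  finally show ?thesis
    by (simp add: field_simps)
qed

definition diag_reflection :: "'n \<Rightarrow> 'n \<Rightarrow> real^'n \<Rightarrow> real^'n" where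
  "diag_reflection i j x = (\<chi> k. if k = i then (x $ i + x $ j) / sqrt 2
     else if k = j then (x $ i - x $ j) / sqrt 2 else x $ k)"

lemma orthogonal_transformation_diag_reflection:
  fixes i j :: "'n::finite"
  assumes "i \<noteq> j"
  shows "orthogonal_transformation (diag_reflection i j :: real^'n \<Rightarrow> real^'n)"
proof -
  have split: "(\<Sum>k\<in>UNIV. F k) = F i + F j + (\<Sum>k\<in>UNIV - {i, j}. F k)" for F :: "'n \<Rightarrow> real"
    using assms by (subst sum.subset_diff[of "{i, j}"]) auto
  have "((a + b) / sqrt 2)\<^sup>2 + ((a - b) / sqrt 2)\<^sup>2 = a\<^sup>2 + b\<^sup>2" for a b :: real
    by (simp add: power_divide field_simps power2_eq_square)
  then have "norm (diag_reflection i j x) ^ 2 = norm x ^ 2" for x :: "real^'n"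
    using assms unfolding norm_pow2_cart split[of "\<lambda>k. (_ $ k)\<^sup>2"]
    by (simp add: diag_reflection_def)
  then have "norm (diag_reflection i j x) = norm x" for x :: "real^'n"
    using power2_eq_imp_eq by (metis norm_ge_zero)
  moreover have "linear (diag_reflection i j :: real^'n \<Rightarrow> real^'n)"
    by (auto simp: linear_iff vec_eq_iff diag_reflection_def field_simps)
  ultimately show ?thesis
    by (simp add: orthogonal_transformation)
qed

lemma sphere_avg_coord_pow4_eq:
  fixes i j :: "'n::finite"
  assumes "i \<noteq> j"
  shows "sphere_avg \<rho> (\<lambda>x::real^'n. (x $ i) ^ 4) = 3 * sphere_avg \<rho> (\<lambda>x. (x $ i)\<^sup>2 * (x $ j)\<^sup>2)"
proof -
  have s4: "sqrt 2 ^ 4 = (4::real)"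
    using power_mult[of "sqrt 2" 2 2] by simp
  have "((a + b) / sqrt 2) ^ 4 =
      (1/4) * a ^ 4 + (a ^ 3 * b + ((3/2) * (a\<^sup>2 * b\<^sup>2) + (a * b ^ 3 + (1/4) * b ^ 4)))" for a b :: real
    unfolding power_divide s4 by (simp add: field_simps) algebra
  then have expand: "(diag_reflection i j x $ i) ^ 4 = (1/4) * (x $ i) ^ 4 + ((x $ i) ^ 3 * x $ j +
      ((3/2) * ((x $ i)\<^sup>2 * (x $ j)\<^sup>2) + (x $ i * (x $ j) ^ 3 + (1/4) * (x $ j) ^ 4)))" for x :: "real^'n"
    by (simp add: diag_reflection_def)
  have odd1: "sphere_avg \<rho> (\<lambda>x::real^'n. (x $ i) ^ 3 * x $ j) = 0"
    using assms by (intro sphere_avg.odd_vanishes[where i = j]) (auto intro!: continuous_intros)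
  have odd2: "sphere_avg \<rho> (\<lambda>x::real^'n. x $ i * (x $ j) ^ 3) = 0"
    using assms by (intro sphere_avg.odd_vanishes[where i = i]) (auto intro!: continuous_intros)
  have "sphere_avg \<rho> (\<lambda>x::real^'n. (x $ i) ^ 4) = sphere_avg \<rho> (\<lambda>x. (diag_reflection i j x $ i) ^ 4)"
    by (rule sphere_avg_orthogonal[symmetric, where f = "\<lambda>x. (x $ i) ^ 4",
          OF orthogonal_transformation_diag_reflection[OF assms]])
      (intro continuous_intros)
  also have "\<dots> = (1/4) * sphere_avg \<rho> (\<lambda>x. (x $ i) ^ 4) + (3/2) * sphere_avg \<rho> (\<lambda>x. (x $ i)\<^sup>2 * (x $ j)\<^sup>2)
      + (1/4) * sphere_avg \<rho> (\<lambda>x. (x $ j) ^ 4)"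
    unfolding expand
    by (simp add: sphere_avg_add sphere_avg_cmult sphere_avg.cdiv odd1 odd2 continuous_intros)
  finally show ?thesis
    using sphere_avg.coord_pow[of \<rho> j 4 i] by simp
qed

lemma sphere_avg_coord_sq_sq:
  fixes i j :: "'n::finite"
  assumes "\<rho> \<noteq> 0" "i \<noteq> j"
  shows "sphere_avg \<rho> (\<lambda>x::real^'n. (x $ i)\<^sup>2 * (x $ j)\<^sup>2) = \<rho> ^ 4 / (CARD('n) * (CARD('n) + 2))"
proof -
  define c :: real where "c = CARD('n) * (CARD('n) + 2)"
  have "\<rho> ^ 4 = sphere_avg \<rho> (\<lambda>x::real^'n. norm x ^ 4)"
    using sphere_avg_norm_pow[OF assms(1), of 4, where 'n = 'n] by simp
  also have "\<dots> = c * sphere_avg \<rho> (\<lambda>x::real^'n. (x $ i)\<^sup>2 * (x $ j)\<^sup>2)"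
    unfolding sphere_avg.norm_pow4[OF assms(2)] sphere_avg_coord_pow4_eq[OF assms(2)] c_def
    by (simp add: algebra_simps)
  finally have "\<rho> ^ 4 = c * sphere_avg \<rho> (\<lambda>x::real^'n. (x $ i)\<^sup>2 * (x $ j)\<^sup>2)" .
  moreover have "c > 0"
    unfolding c_def of_nat_0_less_iff by simp
  ultimately show ?thesis
    unfolding c_def[symmetric] by (simp add: field_simps)
qed

lemma sphere_avg_coord_pow4:
  assumes "\<rho> \<noteq> 0"
  shows "sphere_avg \<rho> (\<lambda>x::real^'n. (x $ i) ^ 4) = 3 * \<rho> ^ 4 / (CARD('n) * (CARD('n) + 2))"
proof (cases "\<exists>j. j \<noteq> i")
  case True
  then obtain j where "i \<noteq> j"
    by metis
  then show ?thesis
    by (simp add: sphere_avg_coord_pow4_eq sphere_avg_coord_sq_sq[OF assms])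
next
  case False
  then have UNIV: "UNIV = {i}"
    by auto
  have "norm x ^ 4 = (x $ i) ^ 4" for x :: "real^'n"
  proof -
    have "norm x ^ 2 = (x $ i) ^ 2"
      using norm_pow2_cart[of x] by (simp add: UNIV)
    then have "(norm x ^ 2) ^ 2 = ((x $ i) ^ 2) ^ 2"
      by simp
    then show ?thesis
      by (simp flip: power_mult)
  qed
  moreover have "CARD('n) = 1"
    by (simp add: UNIV)
  ultimately show ?thesis
    using sphere_avg_norm_pow[OF assms, of 4, where 'n = 'n] by simp
qed

section \<open>Euclidean 5-designs with coordinate symmetry\<close>

lemma monomial_eq_prod_support:
  "monomial a x = (\<Prod>i\<in>{i. a i \<noteq> 0}. (x $ i) ^ a i)"
  unfolding monomial_def by (rule prod.mono_neutral_right) auto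

lemma poly_fun_deg_monomial: "(\<Sum>i\<in>UNIV. a i) \<le> t \<Longrightarrow> poly_fun_deg t (monomial a)"
  unfolding poly_fun_deg_def monomial_def by (intro exI[of _ "{a}"] exI[of _ "\<lambda>_. 1"]) simp

lemma even_monomial_cases:
  fixes a :: "'n::finite \<Rightarrow> nat"
  assumes even: "\<And>i. even (a i)" and deg: "(\<Sum>i\<in>UNIV. a i) \<le> 5"
  obtains "monomial a = (\<lambda>x. 1)"
    | i where "monomial a = (\<lambda>x. (x $ i)\<^sup>2)"
    | i where "monomial a = (\<lambda>x. (x $ i) ^ 4)"
    | i j where "i \<noteq> j" "monomial a = (\<lambda>x. (x $ i)\<^sup>2 * (x $ j)\<^sup>2)"
proof -
  define S where "S = {i. a i \<noteq> 0}"
  have ge2: "a i \<ge> 2" if "i \<in> S" for i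
    using even[of i] that by (auto simp: S_def elim!: evenE)
  have "(\<Sum>i\<in>S. a i) = (\<Sum>i\<in>UNIV. a i)"
    by (rule sum.mono_neutral_left) (auto simp: S_def)
  then have sum_S: "(\<Sum>i\<in>S. a i) \<le> 5"
    using deg by simp
  have "2 * card S \<le> (\<Sum>i\<in>S. a i)"
    using sum_mono[of S "\<lambda>_. 2" a] ge2 by simp
  then have "card S \<le> 2"
    using sum_S by linarith
  then consider "S = {}" | i where "S = {i}" | i j where "i \<noteq> j" "S = {i, j}"
    by (metis card_0_eq card_1_singletonE card_2_iff finite le_Suc_eq numerals(2) le_0_eq
        One_nat_def Suc_1)
  then show ?thesis
  proof cases
    case 1
    have "monomial a = (\<lambda>x. 1)"
      unfolding monomial_eq_prod_support S_def[symmetric] 1 by simp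
    then show ?thesis
      by (rule that(1))
  next
    case (2 i)
    then have "a i = 2 \<or> a i = 4"
      using sum_S ge2[of i] even[of i] by auto
    moreover have "monomial a = (\<lambda>x. (x $ i) ^ a i)"
      unfolding monomial_eq_prod_support S_def[symmetric] 2 by simp
    ultimately show ?thesis
      using that(2,3) by auto
  next
    case (3 i j)
    then have "a i = 2" "a j = 2"
      using sum_S ge2[of i] ge2[of j] even[of i] even[of j] by auto
    moreover have "monomial a = (\<lambda>x. (x $ i) ^ a i * (x $ j) ^ a j)"
      unfolding monomial_eq_prod_support S_def[symmetric] 3(2) using 3(1) by simp
    ultimately show ?thesis
      using that(4)[OF 3(1)] by simp
  qed
qed

lemma euclidean_design_iff_monomials:
  fixes X :: "(real^'n) set"
  shows "euclidean_design t X w \<longleftrightarrow> finite X \<and> 0 \<notin> X \<and> (\<forall>x\<in>X. w x > 0) \<and>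
     (\<forall>a. (\<Sum>i\<in>UNIV. a i) \<le> t \<longrightarrow>
        (\<Sum>x\<in>X. w x * sphere_avg (norm x) (monomial a)) = (\<Sum>x\<in>X. w x * monomial a x))"
proof -
  have shells: "(\<Sum>\<rho>\<in>norm ` X. (\<Sum>x\<in>{x\<in>X. norm x = \<rho>}. w x) * sphere_avg \<rho> f) =
      (\<Sum>x\<in>X. w x * sphere_avg (norm x) f)" if "finite X" for f :: "real^'n \<Rightarrow> real"
    using sum.image_gen[OF that, of "\<lambda>x. w x * sphere_avg (norm x) f" norm]
    by (simp add: sum_distrib_right)
  have polys: "(\<Sum>x\<in>X. w x * sphere_avg (norm x) f) = (\<Sum>x\<in>X. w x * f x)"
    if "poly_fun_deg t f"
      and mono_eqs: "\<forall>a. (\<Sum>i\<in>UNIV. a i) \<le> t \<longrightarrow>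
        (\<Sum>x\<in>X. w x * sphere_avg (norm x) (monomial a)) = (\<Sum>x\<in>X. w x * monomial a x)"
    for f :: "real^'n \<Rightarrow> real"
  proof -
    obtain A c where A: "finite A" "\<forall>a\<in>A. (\<Sum>i\<in>UNIV. a i) \<le> t"
      and f_eq: "\<forall>x. f x = (\<Sum>a\<in>A. c a * (\<Prod>i\<in>UNIV. (x $ i) ^ a i))"
      using \<open>poly_fun_deg t f\<close> unfolding poly_fun_deg_def by blast
    then have f: "f = (\<lambda>x. \<Sum>a\<in>A. c a * monomial a x)"
      by (simp add: fun_eq_iff monomial_def)
    have "sphere_avg \<rho> f = (\<Sum>a\<in>A. sphere_avg \<rho> (\<lambda>x. c a * monomial a x))" for \<rho>
      unfolding f by (rule sphere_avg.sum[OF A(1)]) (intro continuous_intros continuous_on_monomial)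
    then have "sphere_avg \<rho> f = (\<Sum>a\<in>A. c a * sphere_avg \<rho> (monomial a))" for \<rho>
      by (simp add: sphere_avg_cmult)
    then have "(\<Sum>x\<in>X. w x * sphere_avg (norm x) f) =
        (\<Sum>a\<in>A. c a * (\<Sum>x\<in>X. w x * sphere_avg (norm x) (monomial a)))"
      by (simp add: sum_distrib_left sum.swap[of _ X] algebra_simps)
    also have "\<dots> = (\<Sum>a\<in>A. c a * (\<Sum>x\<in>X. w x * monomial a x))"
      using A(2) mono_eqs by (intro sum.cong refl) simp
    also have "\<dots> = (\<Sum>x\<in>X. w x * f x)"
      by (simp add: f sum_distrib_left sum.swap[of _ X] algebra_simps)
    finally show ?thesis .
  qed
  show ?thesis
  proof (cases "finite X \<and> 0 \<notin> X \<and> (\<forall>x\<in>X. w x > 0)")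
    case True
    then have "euclidean_design t X w \<longleftrightarrow> (\<forall>f. poly_fun_deg t f \<longrightarrow>
        (\<Sum>x\<in>X. w x * sphere_avg (norm x) f) = (\<Sum>x\<in>X. w x * f x))"
      by (simp add: euclidean_design_def shells)
    also have "\<dots> \<longleftrightarrow> (\<forall>a. (\<Sum>i\<in>UNIV. a i) \<le> t \<longrightarrow>
        (\<Sum>x\<in>X. w x * sphere_avg (norm x) (monomial a)) = (\<Sum>x\<in>X. w x * monomial a x))"
      using polys poly_fun_deg_monomial by blast
    finally show ?thesis
      using True by simp
  qed (auto simp: euclidean_design_def)
qed

lemma coord_symmetric_functional_weighted_sum:
  fixes X :: "(real^'n) set"
  assumes flip: "\<And>i x. x \<in> X \<Longrightarrow> coord_flip i x \<in> X \<and> w (coord_flip i x) = w x"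
    and relabel: "\<And>p x. bij p \<Longrightarrow> x \<in> X \<Longrightarrow> vec_relabel p x \<in> X \<and> w (vec_relabel p x) = w x"
  shows "coord_symmetric_functional (\<lambda>f. \<Sum>x\<in>X. w x * f x)"
proof
  fix f g :: "real^'n \<Rightarrow> real" and c i and p :: "'n \<Rightarrow> 'n"
  show "(\<Sum>x\<in>X. w x * (f x + g x)) = (\<Sum>x\<in>X. w x * f x) + (\<Sum>x\<in>X. w x * g x)"
    by (simp add: distrib_left sum.distrib)
  show "(\<Sum>x\<in>X. w x * (c * f x)) = c * (\<Sum>x\<in>X. w x * f x)"
    by (simp add: sum_distrib_left mult.left_commute)
  show "(\<Sum>x\<in>X. w x * f (coord_flip i x)) = (\<Sum>x\<in>X. w x * f x)"
    using flip by (intro sum.reindex_bij_witness[of _ "coord_flip i" "coord_flip i"]) auto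
  assume "bij p"
  then show "(\<Sum>x\<in>X. w x * f (vec_relabel p x)) = (\<Sum>x\<in>X. w x * f x)"
    using relabel bij_imp_bij_inv[OF \<open>bij p\<close>]
    by (intro sum.reindex_bij_witness[of _ "vec_relabel (inv p)" "vec_relabel p"])
      (auto simp: vec_relabel_inv)
qed

lemma sum_weighted_sphere_avg_homogeneous:
  assumes "0 \<notin> X" and hom: "\<And>\<rho>. \<rho> \<noteq> 0 \<Longrightarrow> sphere_avg \<rho> f = c * \<rho> ^ m"
  shows "(\<Sum>x\<in>X. w x * sphere_avg (norm x) f) = c * (\<Sum>x\<in>X. w x * norm x ^ m)"
proof -
  have "sphere_avg (norm x) f = c * norm x ^ m" if "x \<in> X" for x
    using assms(1) that by (intro hom) auto
  then show ?thesis
    by (simp add: sum_distrib_left mult.left_commute)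
qed

lemma sum_weighted_sphere_avg_even_moments:
  fixes X :: "(real^'n) set" and i j :: 'n
  assumes sym: "coord_symmetric_functional (\<lambda>f. \<Sum>x\<in>X. w x * f x)"
    and X0: "0 \<notin> X" and ij: "i \<noteq> j"
  defines "A \<equiv> \<Sum>x\<in>X. w x * (x $ i) ^ 4" and "B \<equiv> \<Sum>x\<in>X. w x * ((x $ i)\<^sup>2 * (x $ j)\<^sup>2)"
  shows "(\<Sum>x\<in>X. w x * sphere_avg (norm x) (\<lambda>x. (x $ k)\<^sup>2)) = (\<Sum>x\<in>X. w x * (x $ k)\<^sup>2)"
    and "(\<Sum>x\<in>X. w x * sphere_avg (norm x) (\<lambda>x. (x $ k) ^ 4)) - (\<Sum>x\<in>X. w x * (x $ k) ^ 4) =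
      (real CARD('n) - 1) * (3 * B - A) / (real CARD('n) + 2)"
    and "k \<noteq> l \<Longrightarrow> (\<Sum>x\<in>X. w x * sphere_avg (norm x) (\<lambda>x. (x $ k)\<^sup>2 * (x $ l)\<^sup>2)) -
      (\<Sum>x\<in>X. w x * ((x $ k)\<^sup>2 * (x $ l)\<^sup>2)) = (A - 3 * B) / (real CARD('n) + 2)"
proof -
  interpret M: coord_symmetric_functional "\<lambda>f. \<Sum>x\<in>X. w x * f x"
    by (fact sym)
  define n :: real where "n = CARD('n)"
  have "n > 0"
    by (simp add: n_def)
  have N4: "(\<Sum>x\<in>X. w x * norm x ^ 4) = n * (A + (n - 1) * B)"
    unfolding M.norm_pow4[OF ij] A_def B_def n_def ..
  have "(\<Sum>x\<in>X. w x * sphere_avg (norm x) (\<lambda>x. (x $ k)\<^sup>2)) = 1 / n * (\<Sum>x\<in>X. w x * norm x ^ 2)"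
    by (rule sum_weighted_sphere_avg_homogeneous[OF X0]) (simp add: sphere_avg_coord_pow2 n_def)
  then show "(\<Sum>x\<in>X. w x * sphere_avg (norm x) (\<lambda>x. (x $ k)\<^sup>2)) = (\<Sum>x\<in>X. w x * (x $ k)\<^sup>2)"
    using M.norm_pow2[of k] \<open>n > 0\<close> by (simp add: n_def)
  have "(\<Sum>x\<in>X. w x * sphere_avg (norm x) (\<lambda>x. (x $ k) ^ 4)) =
      3 / (n * (n + 2)) * (\<Sum>x\<in>X. w x * norm x ^ 4)"
    by (rule sum_weighted_sphere_avg_homogeneous[OF X0])
      (simp add: sphere_avg_coord_pow4 n_def algebra_simps)
  moreover have "(\<Sum>x\<in>X. w x * (x $ k) ^ 4) = A"
    unfolding A_def by (rule M.coord_pow)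
  ultimately show "(\<Sum>x\<in>X. w x * sphere_avg (norm x) (\<lambda>x. (x $ k) ^ 4)) - (\<Sum>x\<in>X. w x * (x $ k) ^ 4) =
      (real CARD('n) - 1) * (3 * B - A) / (real CARD('n) + 2)"
    using \<open>n > 0\<close> unfolding N4 n_def[symmetric] by (simp add: divide_simps) algebra
  assume "k \<noteq> l"
  have "(\<Sum>x\<in>X. w x * sphere_avg (norm x) (\<lambda>x. (x $ k)\<^sup>2 * (x $ l)\<^sup>2)) =
      1 / (n * (n + 2)) * (\<Sum>x\<in>X. w x * norm x ^ 4)"
    by (rule sum_weighted_sphere_avg_homogeneous[OF X0])
      (simp add: sphere_avg_coord_sq_sq[OF _ \<open>k \<noteq> l\<close>] n_def algebra_simps)
  moreover have "(\<Sum>x\<in>X. w x * ((x $ k)\<^sup>2 * (x $ l)\<^sup>2)) = B"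
    unfolding B_def by (rule M.coord_sq_sq[OF \<open>k \<noteq> l\<close> ij])
  ultimately show "(\<Sum>x\<in>X. w x * sphere_avg (norm x) (\<lambda>x. (x $ k)\<^sup>2 * (x $ l)\<^sup>2)) -
      (\<Sum>x\<in>X. w x * ((x $ k)\<^sup>2 * (x $ l)\<^sup>2)) = (A - 3 * B) / (real CARD('n) + 2)"
    using \<open>n > 0\<close> unfolding N4 n_def[symmetric] by (simp add: divide_simps) algebra
qed

lemma sum_weighted_sphere_avg_monomial:
  fixes X :: "(real^'n) set" and i j :: 'n
  assumes sym: "coord_symmetric_functional (\<lambda>f. \<Sum>x\<in>X. w x * f x)"
    and X0: "0 \<notin> X" and ij: "i \<noteq> j"
    and balanced: "(\<Sum>x\<in>X. w x * (x $ i) ^ 4) = 3 * (\<Sum>x\<in>X. w x * ((x $ i)\<^sup>2 * (x $ j)\<^sup>2))"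
    and deg: "(\<Sum>k\<in>UNIV. b k) \<le> 5"
  shows "(\<Sum>x\<in>X. w x * sphere_avg (norm x) (monomial b)) = (\<Sum>x\<in>X. w x * monomial b x)"
proof -
  interpret M: coord_symmetric_functional "\<lambda>f. \<Sum>x\<in>X. w x * f x"
    by (fact sym)
  note moments = sum_weighted_sphere_avg_even_moments[OF sym X0 ij]
  show ?thesis
  proof (cases "\<exists>k. odd (b k)")
    case True
    then obtain k where "odd (b k)"
      by blast
    then show ?thesis
      using sphere_avg.monomial_odd[where a = b and i = k] M.monomial_odd[where a = b and i = k]
      by simp
  next
    case False
    then have "\<And>k. even (b k)"
      by blast
    then show ?thesis
    proof (rule even_monomial_cases[OF _ deg])
      assume const: "monomial b = (\<lambda>x. 1)"
      have "sphere_avg \<rho> (\<lambda>x::real^'n. 1) = 1 * \<rho> ^ 0" if "\<rho> \<noteq> 0" for \<rho>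
        using that by (intro sphere_avg_const_on_sphere) simp_all
      then have "(\<Sum>x\<in>X. w x * sphere_avg (norm x) (\<lambda>x::real^'n. 1)) = 1 * (\<Sum>x\<in>X. w x * norm x ^ 0)"
        by (rule sum_weighted_sphere_avg_homogeneous[OF X0])
      then show ?thesis
        using const by simp
    qed (use moments balanced in \<open>simp_all add: right_minus_eq\<close>)
  qed
qed

lemma euclidean_design_5_iff:
  fixes X :: "(real^'n) set" and i j :: 'n
  assumes fin: "finite X" and X0: "0 \<notin> X" and wpos: "\<forall>x\<in>X. w x > 0"
    and flip: "\<And>i x. x \<in> X \<Longrightarrow> coord_flip i x \<in> X \<and> w (coord_flip i x) = w x"
    and relabel: "\<And>p x. bij p \<Longrightarrow> x \<in> X \<Longrightarrow> vec_relabel p x \<in> X \<and> w (vec_relabel p x) = w x"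
    and ij: "i \<noteq> j"
  shows "euclidean_design 5 X w \<longleftrightarrow>
    (\<Sum>x\<in>X. w x * (x $ i) ^ 4) = 3 * (\<Sum>x\<in>X. w x * ((x $ i)\<^sup>2 * (x $ j)\<^sup>2))"
    (is "_ \<longleftrightarrow> ?A = 3 * ?B")
proof -
  have sym: "coord_symmetric_functional (\<lambda>f. \<Sum>x\<in>X. w x * f x)"
    using flip relabel by (rule coord_symmetric_functional_weighted_sum)
  define a where "a = (\<lambda>k. if k \<in> {i, j} then 2 else (0::nat))"
  have supp: "{k. a k \<noteq> 0} = {i, j}"
    by (auto simp: a_def)
  have "(\<Sum>k\<in>UNIV. a k) = (\<Sum>k\<in>{i, j}. a k)"
    by (rule sum.mono_neutral_right) (auto simp: a_def)
  then have deg_a: "(\<Sum>k\<in>UNIV. a k) \<le> 5"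
    using ij by (simp add: a_def)
  have mono_a: "monomial a = (\<lambda>x. (x $ i)\<^sup>2 * (x $ j)\<^sup>2)"
    unfolding monomial_eq_prod_support supp using ij by (simp add: a_def)
  show ?thesis
  proof
    assume "euclidean_design 5 X w"
    then have "(\<Sum>x\<in>X. w x * sphere_avg (norm x) (\<lambda>x. (x $ i)\<^sup>2 * (x $ j)\<^sup>2)) = ?B"
      using deg_a mono_a unfolding euclidean_design_iff_monomials by metis
    then have "(?A - 3 * ?B) / (real CARD('n) + 2) = 0"
      using sum_weighted_sphere_avg_even_moments(3)[OF sym X0 ij ij] by simp
    moreover have "real CARD('n) + 2 \<noteq> 0"
      by linarith
    ultimately show "?A = 3 * ?B"
      by simp
  next
    assume "?A = 3 * ?B"
    then show "euclidean_design 5 X w"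
      using fin X0 wpos sum_weighted_sphere_avg_monomial[OF sym X0 ij]
      unfolding euclidean_design_iff_monomials by blast
  qed
qed

section \<open>The shells I^n_k and the sets X(J)\<close>

lemma vec_coords_in_eq_image: "{x :: real^'n. \<forall>i. x $ i \<in> S} = vec_lambda ` PiE UNIV (\<lambda>_. S)"
proof
  show "{x :: real^'n. \<forall>i. x $ i \<in> S} \<subseteq> vec_lambda ` PiE UNIV (\<lambda>_. S)"
    by (auto intro!: image_eqI[of _ _ "vec_nth _"])
qed auto

lemma finite_Ink: "finite (Ink k :: (real^'n) set)"
proof (rule finite_subset)
  show "Ink k \<subseteq> {x :: real^'n. \<forall>i. x $ i \<in> {-1, 0, 1}}"
    by (auto simp: Ink_def)
qed (unfold vec_coords_in_eq_image, intro finite_imageI finite_PiE, simp_all)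

lemma support_coord_flip: "{k. coord_flip i x $ k \<noteq> 0} = {k. x $ k \<noteq> 0}"
  by auto

lemma card_support_vec_relabel:
  assumes "bij p"
  shows "card {k. vec_relabel p x $ k \<noteq> 0} = card {k. x $ k \<noteq> 0}"
proof -
  have "{k. vec_relabel p x $ k \<noteq> 0} = p -` {k. x $ k \<noteq> 0}"
    by auto
  then show ?thesis
    using assms by (metis bij_is_inj bij_is_surj card_vimage_inj top_greatest)
qed

lemma support_scaleR: "c \<noteq> 0 \<Longrightarrow> {k. (c *\<^sub>R x) $ k \<noteq> 0} = {k. x $ k \<noteq> 0}"
  by auto

lemma coord_flip_Ink: "y \<in> Ink k \<Longrightarrow> coord_flip i y \<in> Ink k"
  unfolding Ink_def mem_Collect_eq support_coord_flip by auto

lemma vec_relabel_Ink: "bij p \<Longrightarrow> y \<in> Ink k \<Longrightarrow> vec_relabel p y \<in> Ink k"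
  unfolding Ink_def mem_Collect_eq by (simp only: card_support_vec_relabel) simp

lemma Ink_coord_sq: "y \<in> Ink k \<Longrightarrow> (y $ i)\<^sup>2 = (if y $ i = 0 then 0 else 1)"
  by (auto simp: Ink_def) (metis empty_iff insert_iff power2_minus power_one)

lemma Ink_coord_pow4:
  assumes "y \<in> Ink k"
  shows "(y $ i) ^ 4 = (y $ i)\<^sup>2"
proof -
  have "(y $ i) ^ 4 = ((y $ i)\<^sup>2)\<^sup>2"
    by simp
  then show ?thesis
    using Ink_coord_sq[OF assms, of i] by simp
qed

lemma norm_pow2_Ink: "y \<in> Ink k \<Longrightarrow> norm y ^ 2 = k"
proof -
  assume y: "y \<in> Ink k"
  have "norm y ^ 2 = (\<Sum>i\<in>UNIV. if y $ i = 0 then 0 else 1)"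
    unfolding norm_pow2_cart using Ink_coord_sq[OF y] by simp
  also have "\<dots> = card {i. y $ i \<noteq> 0}"
    by (simp add: sum.If_cases Collect_neg_eq Compl_eq_Diff_UNIV)
  finally show ?thesis
    using y by (simp add: Ink_def)
qed

lemma sum_Ink_coord_moments:
  fixes i j :: "'n::finite"
  assumes "i \<noteq> j"
  shows "(\<Sum>y\<in>Ink k. (y $ i) ^ 4) = k * card (Ink k :: (real^'n) set) / CARD('n)"
    and "(real CARD('n) - 1) * (\<Sum>y\<in>(Ink k :: (real^'n) set). (y $ i)\<^sup>2 * (y $ j)\<^sup>2) =
      k * (real k - 1) * card (Ink k :: (real^'n) set) / CARD('n)"
proof -
  interpret M: coord_symmetric_functional "\<lambda>f. \<Sum>y\<in>(Ink k :: (real^'n) set). 1 * f y"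
    by (rule coord_symmetric_functional_weighted_sum) (simp_all add: coord_flip_Ink vec_relabel_Ink)
  have P: "(\<Sum>y\<in>(Ink k :: (real^'n) set). (y $ i) ^ 4) = (\<Sum>y\<in>(Ink k :: (real^'n) set). (y $ i)\<^sup>2)"
    by (simp add: Ink_coord_pow4)
  have "k * card (Ink k :: (real^'n) set) = (\<Sum>y\<in>(Ink k :: (real^'n) set). norm y ^ 2)"
    by (simp add: norm_pow2_Ink)
  also have "\<dots> = CARD('n) * (\<Sum>y\<in>Ink k. (y $ i) ^ 4)"
    using M.norm_pow2[of i] by (simp add: P)
  finally show P4: "(\<Sum>y\<in>Ink k. (y $ i) ^ 4) = k * card (Ink k :: (real^'n) set) / CARD('n)"
    by (simp add: field_simps)
  have "norm y ^ 4 = k\<^sup>2" if "y \<in> Ink k" for y :: "real^'n"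
  proof -
    have "norm y ^ 4 = (norm y ^ 2)\<^sup>2"
      by simp
    then show ?thesis
      using norm_pow2_Ink[OF that] by simp
  qed
  then have "k\<^sup>2 * card (Ink k :: (real^'n) set) = (\<Sum>y\<in>(Ink k :: (real^'n) set). norm y ^ 4)"
    by simp
  also have "\<dots> = CARD('n) * ((\<Sum>y\<in>Ink k. (y $ i) ^ 4) +
      (real CARD('n) - 1) * (\<Sum>y\<in>(Ink k :: (real^'n) set). (y $ i)\<^sup>2 * (y $ j)\<^sup>2))"
    using M.norm_pow4[OF assms] by simp
  finally show "(real CARD('n) - 1) * (\<Sum>y\<in>(Ink k :: (real^'n) set). (y $ i)\<^sup>2 * (y $ j)\<^sup>2) =
      k * (real k - 1) * card (Ink k :: (real^'n) set) / CARD('n)"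
    unfolding P4 by (simp add: divide_simps power2_eq_square) algebra
qed

lemma card_vec_coords_in:
  assumes "finite S"
  shows "card {x :: real^'n. \<forall>i. x $ i \<in> S} = card S ^ CARD('n)"
proof -
  have "inj_on (vec_lambda :: ('n \<Rightarrow> real) \<Rightarrow> real^'n) (PiE UNIV (\<lambda>_. S))"
    by (simp add: inj_on_def vec_lambda_inject)
  then show ?thesis
    unfolding vec_coords_in_eq_image using assms by (simp add: card_image card_PiE)
qed

lemma card_Ink_CARD: "card (Ink CARD('n) :: (real^'n) set) = 2 ^ CARD('n)"
proof -
  have "card {i. y $ i \<noteq> 0} = CARD('n) \<longleftrightarrow> {i. y $ i \<noteq> 0} = UNIV" for y :: "real^'n"
    using card_subset_eq[of UNIV "{i. y $ i \<noteq> 0}"] by auto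
  then have full: "card {i. y $ i \<noteq> 0} = CARD('n) \<longleftrightarrow> (\<forall>i. y $ i \<noteq> 0)" for y :: "real^'n"
    by auto
  have nonzero: "t \<in> {-1, 0, 1} \<and> t \<noteq> 0 \<longleftrightarrow> t \<in> {-1, 1 :: real}" for t
    by auto
  have "(Ink CARD('n) :: (real^'n) set) = {x. \<forall>i. x $ i \<in> {-1, 1}}"
    unfolding Ink_def full all_conj_distrib[symmetric] nonzero ..
  then show ?thesis
    using card_vec_coords_in[of "{-1, 1 :: real}", where 'n = 'n] by (simp add: numeral_2_eq_2)
qed

lemma Ink_1_eq_image: "(Ink 1 :: (real^'n) set) = (\<lambda>(i, s). s *\<^sub>R axis i 1) ` (UNIV \<times> {-1, 1})"
proof (intro equalityI subsetI)
  fix y :: "real^'n"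
  assume y: "y \<in> Ink 1"
  then have "card {k. y $ k \<noteq> 0} = 1"
    by (simp add: Ink_def)
  then obtain i where supp: "{k. y $ k \<noteq> 0} = {i}"
    by (rule card_1_singletonE)
  then have "y $ i \<in> {-1, 1}"
    using y by (auto simp: Ink_def)
  moreover have "y = (y $ i) *\<^sub>R axis i 1"
    using supp by (auto simp: vec_eq_iff axis_def)
  ultimately show "y \<in> (\<lambda>(i, s). s *\<^sub>R axis i 1) ` (UNIV \<times> {-1, 1})"
    by (intro image_eqI[of _ _ "(i, y $ i)"]) simp_all
next
  fix y :: "real^'n"
  assume "y \<in> (\<lambda>(i, s). s *\<^sub>R axis i 1) ` (UNIV \<times> {-1, 1})"
  then obtain i and s :: real where s: "s \<in> {-1, 1}" and y: "y = s *\<^sub>R axis i 1"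
    by auto
  have "{k. y $ k \<noteq> 0} = {i}"
    using s unfolding y by (auto simp: axis_def)
  moreover have "\<forall>k. y $ k \<in> {-1, 0, 1}"
    using s unfolding y by (auto simp: axis_def)
  ultimately show "y \<in> Ink 1"
    by (simp add: Ink_def)
qed

lemma card_Ink_1: "card (Ink 1 :: (real^'n) set) = 2 * CARD('n)"
proof -
  have "inj_on (\<lambda>(i, s). s *\<^sub>R axis i 1 :: real^'n) (UNIV \<times> {-1, 1})"
  proof (rule inj_onI, clarify)
    fix i i' and s s' :: real
    assume "s \<in> {-1, 1}" "s' \<in> {-1, 1}" and eq: "s *\<^sub>R axis i 1 = (s' *\<^sub>R axis i' 1 :: real^'n)"
    moreover have "s = (if i' = i then s' else 0)"
      using arg_cong[OF eq, of "\<lambda>x. x $ i"] by (simp add: axis_def)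
    ultimately show "i = i' \<and> s = s'"
      by (auto split: if_splits)
  qed
  then show ?thesis
    unfolding Ink_1_eq_image by (simp add: card_image card_cartesian_product)
qed

lemma Ink_nonempty:
  assumes "k \<le> CARD('n)"
  shows "(Ink k :: (real^'n) set) \<noteq> {}"
proof -
  obtain K :: "'n set" where "card K = k"
    using obtain_subset_with_card_n[OF assms] by metis
  then have "(\<chi> i. if i \<in> K then 1 else 0) \<in> (Ink k :: (real^'n) set)"
    by (simp add: Ink_def)
  then show ?thesis
    by blast
qed

lemma coord_flip_scaleR: "coord_flip i (c *\<^sub>R x) = c *\<^sub>R coord_flip i x"
  by (simp add: vec_eq_iff)

lemma vec_relabel_scaleR: "vec_relabel p (c *\<^sub>R x) = c *\<^sub>R vec_relabel p x"
  by (simp add: vec_eq_iff)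

lemma shellw_coord_flip: "shellw wk (coord_flip i x) = shellw wk x"
  unfolding shellw_def support_coord_flip ..

lemma shellw_vec_relabel: "bij p \<Longrightarrow> shellw wk (vec_relabel p x) = shellw wk x"
  unfolding shellw_def by (simp only: card_support_vec_relabel)

lemma shellw_scaleR_Ink: "c \<noteq> 0 \<Longrightarrow> y \<in> Ink k \<Longrightarrow> shellw wk (c *\<^sub>R y) = wk k"
  unfolding shellw_def support_scaleR by (simp add: Ink_def)

lemma XJ_closed:
  assumes "\<And>y k. y \<in> Ink k \<Longrightarrow> T y \<in> Ink k" "\<And>c y. T (c *\<^sub>R y) = c *\<^sub>R T y"
  shows "x \<in> XJ J r \<Longrightarrow> T x \<in> XJ J r"
proof -
  assume "x \<in> XJ J r"
  then obtain k y where "k \<in> J" "y \<in> Ink k" "x = (r k / sqrt k) *\<^sub>R y"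
    by (auto simp: XJ_def)
  then have "T x \<in> (\<lambda>y. (r k / sqrt k) *\<^sub>R y) ` Ink k"
    using assms by auto
  then show "T x \<in> XJ J r"
    unfolding XJ_def using \<open>k \<in> J\<close> by blast
qed

lemma coord_flip_XJ: "x \<in> XJ J r \<Longrightarrow> coord_flip i x \<in> XJ J r"
  by (rule XJ_closed[OF coord_flip_Ink coord_flip_scaleR])

lemma vec_relabel_XJ: "bij p \<Longrightarrow> x \<in> XJ J r \<Longrightarrow> vec_relabel p x \<in> XJ J r"
  by (rule XJ_closed[OF vec_relabel_Ink vec_relabel_scaleR])

lemma finite_XJ: "finite J \<Longrightarrow> finite (XJ J r :: (real^'n) set)"
  unfolding XJ_def by (simp add: finite_Ink)

lemma Ink_nonzero: "y \<in> Ink k \<Longrightarrow> k \<noteq> 0 \<Longrightarrow> y \<noteq> 0"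
  by (auto simp: Ink_def)

lemma zero_notin_XJ:
  assumes "0 \<notin> J" "\<forall>k\<in>J. r k > 0"
  shows "0 \<notin> (XJ J r :: (real^'n) set)"
  using assms Ink_nonzero by (fastforce simp: XJ_def)

lemma shellw_pos_XJ:
  assumes "\<forall>k\<in>J. r k > 0" "\<forall>k\<in>J. wk k > 0" "0 \<notin> J"
  shows "\<forall>x\<in>(XJ J r :: (real^'n) set). shellw wk x > 0"
proof
  fix x :: "real^'n"
  assume "x \<in> XJ J r"
  then obtain k y where "k \<in> J" "y \<in> Ink k" "x = (r k / sqrt k) *\<^sub>R y"
    by (auto simp: XJ_def)
  moreover have "r k / sqrt k \<noteq> 0"
    using assms \<open>k \<in> J\<close> by (cases "k = 0") auto
  ultimately show "shellw wk x > 0"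
    using assms(2) by (simp add: shellw_scaleR_Ink)
qed

lemma sum_XJ:
  fixes f :: "real^'n \<Rightarrow> real"
  assumes J: "finite J" "0 \<notin> J" and r: "\<forall>k\<in>J. r k > 0"
  shows "(\<Sum>x\<in>XJ J r. shellw wk x * f x) = (\<Sum>k\<in>J. wk k * (\<Sum>y\<in>Ink k. f ((r k / sqrt k) *\<^sub>R y)))"
proof -
  have scale: "r k / sqrt k \<noteq> 0" if "k \<in> J" for k
    using that J r by (cases "k = 0") auto
  have disjoint: "(\<lambda>y. (r k / sqrt k) *\<^sub>R y) ` Ink k \<inter> (\<lambda>y. (r l / sqrt l) *\<^sub>R y) ` Ink l = {}"
    if "k \<in> J" "l \<in> J" "k \<noteq> l" for k l
  proof -
    have "card {i. x $ i \<noteq> 0} = m"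
      if m: "m \<in> J" and x: "x \<in> (\<lambda>y. (r m / sqrt m) *\<^sub>R y) ` Ink m" for x m
    proof -
      obtain y where "y \<in> Ink m" "x = (r m / sqrt m) *\<^sub>R y"
        using x by auto
      then show ?thesis
        using support_scaleR[OF scale[OF m], of y] by (simp add: Ink_def)
    qed
    then show ?thesis
      using that by (metis disjoint_iff)
  qed
  have "(\<Sum>x\<in>XJ J r. shellw wk x * f x) =
      (\<Sum>k\<in>J. \<Sum>x\<in>(\<lambda>y. (r k / sqrt k) *\<^sub>R y) ` Ink k. shellw wk x * f x)"
    unfolding XJ_def using J(1) disjoint by (intro sum.UNION_disjoint) (auto simp: finite_Ink)
  also have "\<dots> = (\<Sum>k\<in>J. \<Sum>y\<in>Ink k. wk k * f ((r k / sqrt k) *\<^sub>R y))"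
  proof (rule sum.cong[OF refl])
    fix k
    assume k: "k \<in> J"
    have "inj_on (\<lambda>y. (r k / sqrt k) *\<^sub>R y) (Ink k :: (real^'n) set)"
      using scale[OF k] by (auto simp: inj_on_def)
    then have "(\<Sum>x\<in>(\<lambda>y. (r k / sqrt k) *\<^sub>R y) ` Ink k. shellw wk x * f x) =
        (\<Sum>y\<in>Ink k. shellw wk ((r k / sqrt k) *\<^sub>R y) * f ((r k / sqrt k) *\<^sub>R y))"
      by (simp add: sum.reindex)
    also have "\<dots> = (\<Sum>y\<in>Ink k. wk k * f ((r k / sqrt k) *\<^sub>R y))"
      using scale[OF k] by (intro sum.cong refl) (simp add: shellw_scaleR_Ink)
    finally show "(\<Sum>x\<in>(\<lambda>y. (r k / sqrt k) *\<^sub>R y) ` Ink k. shellw wk x * f x) =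
        (\<Sum>y\<in>Ink k. wk k * f ((r k / sqrt k) *\<^sub>R y))" .
  qed
  finally show ?thesis
    by (simp add: sum_distrib_left)
qed

lemma sum_XJ_moment_balance:
  fixes J :: "nat set" and r wk :: "nat \<Rightarrow> real" and i j :: "'n::finite"
  assumes J: "J \<subseteq> {1..CARD('n)}" and r: "\<forall>k\<in>J. r k > 0" and ij: "i \<noteq> j"
  shows "(real CARD('n) - 1) * ((\<Sum>x\<in>XJ J r. shellw wk x * (x $ i) ^ 4) -
      3 * (\<Sum>x\<in>XJ J r. shellw wk x * ((x $ i)\<^sup>2 * (x $ j)\<^sup>2))) =
    (\<Sum>k\<in>J. wk k * (r k ^ 4 * card (Ink k :: (real^'n) set) / k * (real CARD('n) + 2 - 3 * k))) / CARD('n)"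
proof -
  define n :: real where "n = CARD('n)"
  have finJ: "finite J" and J0: "0 \<notin> J"
    using J by (auto intro: finite_subset)
  have scaled: "((c *\<^sub>R y) $ i) ^ 4 = c ^ 4 * (y $ i) ^ 4"
    "((c *\<^sub>R y) $ i)\<^sup>2 * ((c *\<^sub>R y) $ j)\<^sup>2 = c ^ 4 * ((y $ i)\<^sup>2 * (y $ j)\<^sup>2)" for c and y :: "real^'n"
    by (simp_all add: power_mult_distrib algebra_simps flip: power_add)
  have "(n - 1) * ((\<Sum>x\<in>XJ J r. shellw wk x * (x $ i) ^ 4) -
      3 * (\<Sum>x\<in>XJ J r. shellw wk x * ((x $ i)\<^sup>2 * (x $ j)\<^sup>2))) =
    (\<Sum>k\<in>J. wk k * ((r k / sqrt k) ^ 4 * ((n - 1) * (\<Sum>y\<in>(Ink k :: (real^'n) set). (y $ i) ^ 4) -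
      3 * ((n - 1) * (\<Sum>y\<in>(Ink k :: (real^'n) set). (y $ i)\<^sup>2 * (y $ j)\<^sup>2)))))"
    unfolding sum_XJ[OF finJ J0 r] scaled
    by (simp add: sum_distrib_left sum_subtractf[symmetric] algebra_simps)
  also have "\<dots> = (\<Sum>k\<in>J. wk k * (r k ^ 4 * card (Ink k :: (real^'n) set) / k * (n + 2 - 3 * k))) / n"
    unfolding sum_divide_distrib
  proof (rule sum.cong[OF refl])
    fix k
    assume "k \<in> J"
    then have "k > 0"
      using J0 by (cases k) auto
    have "sqrt k ^ 4 = (real k)\<^sup>2"
      using power_mult[of "sqrt (real k)" 2 2] by simp
    then have "(r k / sqrt k) ^ 4 = r k ^ 4 / k\<^sup>2"
      by (simp add: power_divide)
    then show "wk k * ((r k / sqrt k) ^ 4 * ((n - 1) * (\<Sum>y\<in>(Ink k :: (real^'n) set). (y $ i) ^ 4) -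
        3 * ((n - 1) * (\<Sum>y\<in>(Ink k :: (real^'n) set). (y $ i)\<^sup>2 * (y $ j)\<^sup>2)))) =
      wk k * (r k ^ 4 * card (Ink k :: (real^'n) set) / k * (n + 2 - 3 * k)) / n"
      using \<open>k > 0\<close> unfolding sum_Ink_coord_moments[OF ij] n_def
      by (simp add: divide_simps) algebra
  qed
  finally show ?thesis
    unfolding n_def .
qed

lemma euclidean_design_XJ_iff:
  fixes J :: "nat set" and r wk :: "nat \<Rightarrow> real"
  assumes n2: "CARD('n) \<ge> 2" and J: "J \<subseteq> {1..CARD('n)}"
    and r: "\<forall>k\<in>J. r k > 0" and w: "\<forall>k\<in>J. wk k > 0"
  shows "euclidean_design 5 (XJ J r :: (real^'n) set) (shellw wk) \<longleftrightarrow>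
    (\<Sum>k\<in>J. wk k * (r k ^ 4 * card (Ink k :: (real^'n) set) / k * (real CARD('n) + 2 - 3 * k))) = 0"
proof -
  obtain i j :: 'n where ij: "i \<noteq> j"
    using n2 by (metis One_nat_def card_le_Suc0_iff_eq finite not_less_eq_eq numeral_2_eq_2)
  have "finite J" "0 \<notin> J"
    using J by (auto intro: finite_subset)
  then have "euclidean_design 5 (XJ J r :: (real^'n) set) (shellw wk) \<longleftrightarrow>
      (\<Sum>x\<in>XJ J r. shellw wk x * (x $ i) ^ 4) = 3 * (\<Sum>x\<in>XJ J r. shellw wk x * ((x $ i)\<^sup>2 * (x $ j)\<^sup>2))"
    using r w ij
    by (intro euclidean_design_5_iff finite_XJ zero_notin_XJ shellw_pos_XJ)
      (simp_all add: coord_flip_XJ shellw_coord_flip vec_relabel_XJ shellw_vec_relabel)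
  moreover have "real CARD('n) - 1 \<noteq> 0" "real CARD('n) \<noteq> 0"
    using n2 by auto
  ultimately show ?thesis
    using sum_XJ_moment_balance[OF J r ij, of wk] by auto
qed

section \<open>Choosing the weights\<close>

lemma sum_pos_weights_nonneg_eq_0:
  fixes c w :: "'a \<Rightarrow> real"
  assumes "finite J" "\<forall>k\<in>J. w k > 0" "\<forall>k\<in>J. c k \<ge> 0" "(\<Sum>k\<in>J. w k * c k) = 0"
  shows "\<forall>k\<in>J. c k = 0"
proof -
  have nonneg: "0 \<le> w k * c k" if "k \<in> J" for k
    using assms(2,3) that by (simp add: less_imp_le)
  have "\<forall>k\<in>J. w k * c k = 0"
    using sum_nonneg_eq_0_iff[OF assms(1) nonneg] assms(4) by simp
  then show ?thesis
    using assms(2) by force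
qed

lemma exists_pos_weights_sum_eq_0_iff:
  fixes c :: "'a \<Rightarrow> real"
  assumes "finite J"
  shows "(\<exists>w. (\<forall>k\<in>J. w k > 0) \<and> (\<Sum>k\<in>J. w k * c k) = 0) \<longleftrightarrow>
    (\<forall>k\<in>J. c k = 0) \<or> (\<exists>k\<in>J. c k > 0) \<and> (\<exists>k\<in>J. c k < 0)"
proof
  assume "\<exists>w. (\<forall>k\<in>J. w k > 0) \<and> (\<Sum>k\<in>J. w k * c k) = 0"
  then obtain w where w: "\<forall>k\<in>J. w k > 0" and sum0: "(\<Sum>k\<in>J. w k * c k) = 0"
    by blast
  have nonneg: "\<forall>k\<in>J. c k = 0" if "\<forall>k\<in>J. c k \<ge> 0"
    using assms w that sum0 by (rule sum_pos_weights_nonneg_eq_0)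
  have "(\<Sum>k\<in>J. w k * - c k) = 0"
    using sum0 by (simp add: sum_negf)
  then have nonpos: "\<forall>k\<in>J. c k = 0" if "\<forall>k\<in>J. c k \<le> 0"
    using sum_pos_weights_nonneg_eq_0[OF assms w, of "\<lambda>k. - c k"] that by simp
  show "(\<forall>k\<in>J. c k = 0) \<or> (\<exists>k\<in>J. c k > 0) \<and> (\<exists>k\<in>J. c k < 0)"
  proof (cases "(\<exists>k\<in>J. c k > 0) \<and> (\<exists>k\<in>J. c k < 0)")
    case False
    then have "(\<forall>k\<in>J. c k \<le> 0) \<or> (\<forall>k\<in>J. c k \<ge> 0)"
      by (auto simp: not_less)
    then show ?thesis
      using nonneg nonpos by blast
  qed simp
next
  assume "(\<forall>k\<in>J. c k = 0) \<or> (\<exists>k\<in>J. c k > 0) \<and> (\<exists>k\<in>J. c k < 0)"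
  then show "\<exists>w. (\<forall>k\<in>J. w k > 0) \<and> (\<Sum>k\<in>J. w k * c k) = 0"
  proof
    assume "\<forall>k\<in>J. c k = 0"
    then show ?thesis
      by (intro exI[of _ "\<lambda>_. 1"]) simp
  next
    assume "(\<exists>k\<in>J. c k > 0) \<and> (\<exists>k\<in>J. c k < 0)"
    then obtain k1 k2 where k1: "k1 \<in> J" "c k1 > 0" and k2: "k2 \<in> J" "c k2 < 0"
      by blast
    define P where "P = (\<Sum>k\<in>J. max (c k) 0)"
    define N where "N = (\<Sum>k\<in>J. max (- c k) 0)"
    have "max (c k1) 0 \<le> P"
      unfolding P_def by (rule member_le_sum[OF k1(1) _ assms]) simp
    moreover have "max (- c k2) 0 \<le> N"
      unfolding N_def by (rule member_le_sum[OF k2(1) _ assms]) simp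
    ultimately have "P > 0" "N > 0"
      using k1(2) k2(2) by auto
    define w where "w k = (if c k > 0 then N else if c k < 0 then P else 1)" for k
    have "(\<Sum>k\<in>J. w k * c k) = (\<Sum>k\<in>J. N * max (c k) 0 - P * max (- c k) 0)"
      by (intro sum.cong refl) (simp add: w_def max_def)
    also have "\<dots> = 0"
      unfolding sum_subtractf sum_distrib_left[symmetric] P_def[symmetric] N_def[symmetric] by simp
    finally show ?thesis
      using \<open>P > 0\<close> \<open>N > 0\<close> by (intro exI[of _ w]) (auto simp: w_def)
  qed
qed

lemma XJ_coeff_sign:
  fixes r :: "nat \<Rightarrow> real"
  assumes "k \<in> {1..CARD('n)}" "r k > 0"
  defines "p \<equiv> r k ^ 4 * card (Ink k :: (real^'n) set) / k"
  shows "p * (real CARD('n) + 2 - 3 * k) > 0 \<longleftrightarrow> 3 * k < CARD('n) + 2"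
    and "p * (real CARD('n) + 2 - 3 * k) < 0 \<longleftrightarrow> CARD('n) + 2 < 3 * k"
    and "p * (real CARD('n) + 2 - 3 * k) = 0 \<longleftrightarrow> 3 * k = CARD('n) + 2"
proof -
  have "card (Ink k :: (real^'n) set) > 0"
    using assms(1) Ink_nonempty[of k, where 'n = 'n] finite_Ink by (simp add: card_gt_0_iff)
  then have "p > 0"
    using assms(1,2) by (simp add: p_def)
  moreover have "real (3 * k) < real (CARD('n) + 2) \<longleftrightarrow> 3 * k < CARD('n) + 2"
    "real (CARD('n) + 2) < real (3 * k) \<longleftrightarrow> CARD('n) + 2 < 3 * k"
    "real (3 * k) = real (CARD('n) + 2) \<longleftrightarrow> 3 * k = CARD('n) + 2"
    by (simp_all only: of_nat_less_iff of_nat_eq_iff)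
  ultimately show "p * (real CARD('n) + 2 - 3 * k) > 0 \<longleftrightarrow> 3 * k < CARD('n) + 2"
    and "p * (real CARD('n) + 2 - 3 * k) < 0 \<longleftrightarrow> CARD('n) + 2 < 3 * k"
    and "p * (real CARD('n) + 2 - 3 * k) = 0 \<longleftrightarrow> 3 * k = CARD('n) + 2"
    by (auto simp: zero_less_mult_iff mult_less_0_iff)
qed

lemma euclidean_design_XJ_singleton_iff:
  fixes r wk :: "nat \<Rightarrow> real"
  assumes "CARD('n) \<ge> 2" "k \<in> {1..CARD('n)}" "r k > 0" "wk k > 0"
  shows "euclidean_design 5 (XJ {k} r :: (real^'n) set) (shellw wk) \<longleftrightarrow> 3 * k = CARD('n) + 2"
proof -
  have "euclidean_design 5 (XJ {k} r :: (real^'n) set) (shellw wk) \<longleftrightarrow>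
      wk k * (r k ^ 4 * card (Ink k :: (real^'n) set) / k * (real CARD('n) + 2 - 3 * k)) = 0"
    using euclidean_design_XJ_iff[of "{k}" r wk, where 'n = 'n] assms by simp
  also have "\<dots> \<longleftrightarrow> 3 * k = CARD('n) + 2"
    using XJ_coeff_sign(3)[of k r, where 'n = 'n] assms(2-4) by simp
  finally show ?thesis .
qed

lemma ex_weights_euclidean_design_XJ_iff:
  fixes J :: "nat set" and r :: "nat \<Rightarrow> real"
  assumes n2: "CARD('n) \<ge> 2" and J: "J \<subseteq> {1..CARD('n)}" and r: "\<forall>k\<in>J. r k > 0"
    and two: "card J \<ge> 2"
  shows "(\<exists>wk. (\<forall>k\<in>J. wk k > 0) \<and> euclidean_design 5 (XJ J r :: (real^'n) set) (shellw wk)) \<longleftrightarrow>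
    (\<exists>k1\<in>J. \<exists>k2\<in>J. 3 * k1 < CARD('n) + 2 \<and> CARD('n) + 2 < 3 * k2)"
proof -
  define c where "c k = r k ^ 4 * card (Ink k :: (real^'n) set) / k * (real CARD('n) + 2 - 3 * k)" for k
  have sign: "c k > 0 \<longleftrightarrow> 3 * k < CARD('n) + 2" "c k < 0 \<longleftrightarrow> CARD('n) + 2 < 3 * k"
    "c k = 0 \<longleftrightarrow> 3 * k = CARD('n) + 2" if "k \<in> J" for k
    unfolding c_def using XJ_coeff_sign[of k r, where 'n = 'n] that J r by auto
  have "finite J"
    using J by (rule finite_subset) simp
  have "\<not> (\<forall>k\<in>J. c k = 0)"
  proof
    assume "\<forall>k\<in>J. c k = 0"
    then have "J \<subseteq> {(CARD('n) + 2) div 3}"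
      using sign(3) by force
    then have "card J \<le> 1"
      using card_mono[of "{(CARD('n) + 2) div 3}" J] by simp
    then show False
      using two by simp
  qed
  have "(\<exists>wk. (\<forall>k\<in>J. wk k > 0) \<and> euclidean_design 5 (XJ J r :: (real^'n) set) (shellw wk)) \<longleftrightarrow>
      (\<exists>wk. (\<forall>k\<in>J. wk k > 0) \<and> (\<Sum>k\<in>J. wk k * c k) = 0)"
    using euclidean_design_XJ_iff[OF n2 J r] unfolding c_def by blast
  also have "\<dots> \<longleftrightarrow> (\<exists>k\<in>J. c k > 0) \<and> (\<exists>k\<in>J. c k < 0)"
    using exists_pos_weights_sum_eq_0_iff[OF \<open>finite J\<close>] \<open>\<not> (\<forall>k\<in>J. c k = 0)\<close> by blast
  also have "\<dots> \<longleftrightarrow> (\<exists>k1\<in>J. \<exists>k2\<in>J. 3 * k1 < CARD('n) + 2 \<and> CARD('n) + 2 < 3 * k2)"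
    using sign(1,2) by blast
  finally show ?thesis .
qed

lemma euclidean_design_XJ_1_CARD:
  fixes r wk :: "nat \<Rightarrow> real"
  assumes n2: "CARD('n) \<ge> 2" and pos: "r 1 > 0" "r CARD('n) > 0" "wk 1 > 0" "wk CARD('n) > 0"
    and ratio: "(wk 1 / wk CARD('n)) * (r 1 ^ 4 / r CARD('n) ^ 4) = 2 ^ CARD('n) / (real CARD('n))\<^sup>2"
  shows "euclidean_design 5 (XJ {1, CARD('n)} r :: (real^'n) set) (shellw wk)"
proof -
  define n :: real where "n = CARD('n)"
  have "n \<ge> 2"
    using n2 by (simp add: n_def)
  have balance: "wk 1 * r 1 ^ 4 * n\<^sup>2 = wk CARD('n) * r CARD('n) ^ 4 * 2 ^ CARD('n)"
    using ratio pos \<open>n \<ge> 2\<close> unfolding n_def[symmetric] by (simp add: field_simps)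
  have "(\<Sum>k\<in>{1, CARD('n)}. wk k * (r k ^ 4 * card (Ink k :: (real^'n) set) / k *
      (real CARD('n) + 2 - 3 * k))) =
    wk 1 * (r 1 ^ 4 * (2 * n) * (n - 1)) + wk CARD('n) * (r CARD('n) ^ 4 * 2 ^ CARD('n) / n * (2 - 2 * n))"
    using n2 by (simp add: card_Ink_1[simplified] card_Ink_CARD n_def algebra_simps)
  also have "\<dots> = 2 * (n - 1) / n * (wk 1 * r 1 ^ 4 * n\<^sup>2 - wk CARD('n) * r CARD('n) ^ 4 * 2 ^ CARD('n))"
    using \<open>n \<ge> 2\<close> by (simp add: field_simps power2_eq_square)
  also have "\<dots> = 0"
    unfolding balance by simp
  finally show ?thesis
    using euclidean_design_XJ_iff[OF n2, of "{1, CARD('n)}" r wk] n2 pos by simp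
qed

theorem proposition3p2:
  fixes J :: "nat set" and r :: "nat \<Rightarrow> real"
  assumes n3: "CARD('n::finite) \<ge> 3"
    and Jne: "J \<noteq> {}" and Jsub: "J \<subseteq> {1..CARD('n)}"
    and rpos: "\<forall>k\<in>J. r k > 0"
  shows
   "(card J = 1 \<longrightarrow>
      (CARD('n) mod 3 \<noteq> 1 \<longrightarrow>
         (\<forall>wk. (\<forall>k\<in>J. wk k > 0) \<longrightarrow>
            \<not> euclidean_design 5 (XJ J r :: (real^'n) set) (shellw wk))) \<and>
      (CARD('n) mod 3 = 1 \<longrightarrow>
         (\<forall>k. J = {k} \<longrightarrow>
            (\<forall>wk. (\<forall>k\<in>J. wk k > 0) \<longrightarrow>
               (euclidean_design 5 (XJ J r :: (real^'n) set) (shellw wk)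
                  \<longleftrightarrow> 3 * k = CARD('n) + 2)))))
    \<and>
    (card J \<ge> 2 \<longrightarrow>
      ((\<exists>wk. (\<forall>k\<in>J. wk k > 0) \<and>
             euclidean_design 5 (XJ J r :: (real^'n) set) (shellw wk))
        \<longleftrightarrow> (\<exists>k1\<in>J. \<exists>k2\<in>J. 3 * k1 < CARD('n) + 2 \<and> CARD('n) + 2 < 3 * k2)))
    \<and>
    (\<forall>r' wk. r' 1 > 0 \<and> r' CARD('n) > 0 \<and> wk 1 > 0 \<and> wk CARD('n) > 0 \<and>
       (wk 1 / wk CARD('n)) * (r' 1 ^ 4 / r' CARD('n) ^ 4)
          = 2 ^ CARD('n) / (real CARD('n))\<^sup>2 \<longrightarrow>
       euclidean_design 5 (XJ {1, CARD('n)} r' :: (real^'n) set) (shellw wk))"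
proof -
  have n2: "CARD('n) \<ge> 2"
    using n3 by simp
  have single: "euclidean_design 5 (XJ J r :: (real^'n) set) (shellw wk) \<longleftrightarrow> 3 * k = CARD('n) + 2"
    if "J = {k}" "\<forall>k\<in>J. wk k > 0" for k wk
    using euclidean_design_XJ_singleton_iff[OF n2] that Jsub rpos by simp
  have "3 * k \<noteq> CARD('n) + 2" if "CARD('n) mod 3 \<noteq> 1" for k
    using that by presburger
  then have "card J = 1 \<longrightarrow> (CARD('n) mod 3 \<noteq> 1 \<longrightarrow>
      (\<forall>wk. (\<forall>k\<in>J. wk k > 0) \<longrightarrow> \<not> euclidean_design 5 (XJ J r :: (real^'n) set) (shellw wk)))"
    using single by (metis card_1_singletonE)
  moreover note single ex_weights_euclidean_design_XJ_iff[OF n2 Jsub rpos]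
    euclidean_design_XJ_1_CARD[OF n2]
  ultimately show ?thesis
    by blast
qed

end
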